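(* Let $X=\varprojlim X_np_n$ be a reduced regular projective limit of vector lattices $(X_n,\le_n)$. For every additive positive function $a\colon X\to\mathbb R$ there exist $n_a\in\mathbb N$ and additive positive functions $a_n\colon X_n\to\mathbb R$, $n\ge n_a$, such that $a(x)=a_n(\operatorname{pr}_nx)$ for all $x\in X$ and all $n\ge n_a$. Conversely, if $a_n\colon X_n\to\mathbb R$ is additive and positive, then $a:=a_n\circ\operatorname{pr}_n$ is an additive positive function on $X$. The same statements hold with "additive positive" replaced by "difference of two additive positive functions".
   Context: All vector spaces are real. Let $(X_n,\le_n)_{n\in\mathbb N}$ be ordered vector spaces and $p_n\colon X_{n+1}\to X_n$ positive linear maps. The projective limit $X=\varprojlim X_np_n$ is the vector subspace $\{x=(x_n)\in\prod_nX_n:\ x_n=p_n(x_{n+1})\ \text{for all }n\}$ with the coordinatewise order; $\operatorname{pr}_nx=x_n$. It is regular if all $X_n$ are vector lattices and each $p_n$ preserves suprema of finite sets, and reduced if $\operatorname{pr}_nX=X_n$ for all $n$. A function $a$ between additive semigroups is additive if $a(x_1+x_2)=a(x_1)+a(x_2)$; a function $a$ between ordered vector spaces is positive if $a(x)\ge0$ whenever $x\ge0$. *)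

theory Defs
  imports Main "HOL.Real_Vector_Spaces"
begin

text \<open>Each space X_n is modelled as a carrier set S n inside a common real vector
space 'a, with its own order le n. The projective limit consists of sequences
x :: nat => 'a.\<close>

definition linear_subspace_on :: "'a::real_vector set \<Rightarrow> bool" where
  "linear_subspace_on S \<longleftrightarrow> 0 \<in> S \<and> (\<forall>x\<in>S. \<forall>y\<in>S. x + y \<in> S) \<and> (\<forall>c. \<forall>x\<in>S. c *\<^sub>R x \<in> S)"

definition ordered_vector_space_on :: "'a::real_vector set \<Rightarrow> ('a \<Rightarrow> 'a \<Rightarrow> bool) \<Rightarrow> bool" where
  "ordered_vector_space_on S le \<longleftrightarrow> linear_subspace_on S
     \<and> (\<forall>x\<in>S. le x x)
     \<and> (\<forall>x\<in>S. \<forall>y\<in>S. le x y \<and> le y x \<longrightarrow> x = y)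
     \<and> (\<forall>x\<in>S. \<forall>y\<in>S. \<forall>z\<in>S. le x y \<and> le y z \<longrightarrow> le x z)
     \<and> (\<forall>x\<in>S. \<forall>y\<in>S. \<forall>z\<in>S. le x y \<longrightarrow> le (x + z) (y + z))
     \<and> (\<forall>x\<in>S. \<forall>y\<in>S. \<forall>t::real. le x y \<and> 0 \<le> t \<longrightarrow> le (t *\<^sub>R x) (t *\<^sub>R y))"

definition is_sup_on :: "'a set \<Rightarrow> ('a \<Rightarrow> 'a \<Rightarrow> bool) \<Rightarrow> 'a set \<Rightarrow> 'a \<Rightarrow> bool" where
  "is_sup_on S le F s \<longleftrightarrow> s \<in> S \<and> (\<forall>x\<in>F. le x s) \<and> (\<forall>u\<in>S. (\<forall>x\<in>F. le x u) \<longrightarrow> le s u)"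

definition vector_lattice_on :: "'a::real_vector set \<Rightarrow> ('a \<Rightarrow> 'a \<Rightarrow> bool) \<Rightarrow> bool" where
  "vector_lattice_on S le \<longleftrightarrow> ordered_vector_space_on S le
     \<and> (\<forall>x\<in>S. \<forall>y\<in>S. \<exists>s. is_sup_on S le {x, y} s)"

definition positive_linear_map_on ::
  "'a::real_vector set \<Rightarrow> ('a \<Rightarrow> 'a \<Rightarrow> bool) \<Rightarrow> 'a set \<Rightarrow> ('a \<Rightarrow> 'a \<Rightarrow> bool) \<Rightarrow> ('a \<Rightarrow> 'a) \<Rightarrow> bool" where
  "positive_linear_map_on S leS T leT f \<longleftrightarrow> (\<forall>x\<in>S. f x \<in> T)
     \<and> (\<forall>x\<in>S. \<forall>y\<in>S. f (x + y) = f x + f y)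
     \<and> (\<forall>c. \<forall>x\<in>S. f (c *\<^sub>R x) = c *\<^sub>R f x)
     \<and> (\<forall>x\<in>S. leS 0 x \<longrightarrow> leT 0 (f x))"

definition proj_system :: "(nat \<Rightarrow> 'a::real_vector set) \<Rightarrow> (nat \<Rightarrow> 'a \<Rightarrow> 'a \<Rightarrow> bool) \<Rightarrow> (nat \<Rightarrow> 'a \<Rightarrow> 'a) \<Rightarrow> bool" where
  "proj_system S le p \<longleftrightarrow> (\<forall>n. ordered_vector_space_on (S n) (le n))
     \<and> (\<forall>n. positive_linear_map_on (S (Suc n)) (le (Suc n)) (S n) (le n) (p n))"

definition proj_lim :: "(nat \<Rightarrow> 'a set) \<Rightarrow> (nat \<Rightarrow> 'a \<Rightarrow> 'a) \<Rightarrow> (nat \<Rightarrow> 'a) set" where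
  "proj_lim S p = {x. (\<forall>n. x n \<in> S n) \<and> (\<forall>n. x n = p n (x (Suc n)))}"

definition regular_proj_lim :: "(nat \<Rightarrow> 'a::real_vector set) \<Rightarrow> (nat \<Rightarrow> 'a \<Rightarrow> 'a \<Rightarrow> bool) \<Rightarrow> (nat \<Rightarrow> 'a \<Rightarrow> 'a) \<Rightarrow> bool" where
  "regular_proj_lim S le p \<longleftrightarrow> (\<forall>n. vector_lattice_on (S n) (le n))
     \<and> (\<forall>n F s. finite F \<and> F \<noteq> {} \<and> F \<subseteq> S (Suc n) \<and> is_sup_on (S (Suc n)) (le (Suc n)) F s
                 \<longrightarrow> is_sup_on (S n) (le n) (p n ` F) (p n s))"

definition reduced_proj_lim :: "(nat \<Rightarrow> 'a set) \<Rightarrow> (nat \<Rightarrow> 'a \<Rightarrow> 'a) \<Rightarrow> bool" where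
  "reduced_proj_lim S p \<longleftrightarrow> (\<forall>n. (\<lambda>x. x n) ` proj_lim S p = S n)"

definition additive_on :: "'b::plus set \<Rightarrow> ('b \<Rightarrow> real) \<Rightarrow> bool" where
  "additive_on A f \<longleftrightarrow> (\<forall>x\<in>A. \<forall>y\<in>A. f (x + y) = f x + f y)"

definition positive_fun_on :: "'b set \<Rightarrow> ('b \<Rightarrow> 'b \<Rightarrow> bool) \<Rightarrow> 'b \<Rightarrow> ('b \<Rightarrow> real) \<Rightarrow> bool" where
  "positive_fun_on A le z f \<longleftrightarrow> (\<forall>x\<in>A. le z x \<longrightarrow> 0 \<le> f x)"

definition add_pos_on :: "'b::plus set \<Rightarrow> ('b \<Rightarrow> 'b \<Rightarrow> bool) \<Rightarrow> 'b \<Rightarrow> ('b \<Rightarrow> real) \<Rightarrow> bool" where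
  "add_pos_on A le z f \<longleftrightarrow> additive_on A f \<and> positive_fun_on A le z f"

definition diff_add_pos_on :: "'b::plus set \<Rightarrow> ('b \<Rightarrow> 'b \<Rightarrow> bool) \<Rightarrow> 'b \<Rightarrow> ('b \<Rightarrow> real) \<Rightarrow> bool" where
  "diff_add_pos_on A le z f \<longleftrightarrow>
     (\<exists>g h. add_pos_on A le z g \<and> add_pos_on A le z h \<and> (\<forall>x\<in>A. f x = g x - h x))"

instantiation "fun" :: (type, plus) plus begin
definition plus_fun_def: "f + g = (\<lambda>x. f x + g x)"
instance ..
end

definition lim_le :: "(nat \<Rightarrow> 'a \<Rightarrow> 'a \<Rightarrow> bool) \<Rightarrow> (nat \<Rightarrow> 'a) \<Rightarrow> (nat \<Rightarrow> 'a) \<Rightarrow> bool" where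
  "lim_le le x y \<longleftrightarrow> (\<forall>n. le n (x n) (y n))"

end

theory Submission
  imports Defs
begin

text \<open>The heart of the proof is that \<open>a\<close> vanishes on
all \<open>x \<in> X\<close> with \<open>x\<^sub>n\<^sub>0 = 0\<close> for some \<open>n\<^sub>0\<close>. Otherwise, using positive parts (which exist in \<open>X\<close>
by regularity) and natural multiples, one finds for every \<open>j\<close> an element \<open>y\<^sub>j \<ge> 0\<close> of \<open>X\<close> with
\<open>y\<^sub>j\<^sub>,\<^sub>j = 0\<close> and \<open>a(y\<^sub>j) \<ge> 1\<close>. Since \<open>y\<^sub>j\<close> vanishes in all coordinates \<open>k \<le> j\<close>, the sum
\<open>z\<^sub>k = \<Sum>\<^sub>j y\<^sub>j\<^sub>,\<^sub>k\<close> is finite in every coordinate and defines an element of \<open>X\<close> dominating every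
partial sum, whence \<open>a(z) \<ge> N\<close> for all \<open>N\<close>, which is absurd. Once \<open>a\<close> vanishes on the kernel of
\<open>pr\<^sub>n\<close> (\<open>n \<ge> n\<^sub>0\<close>), it factors through \<open>pr\<^sub>n\<close>, which is onto because the limit is reduced; the
factor is positive because a positive element of \<open>X\<^sub>n\<close> lifts to the positive part of any lift.\<close>

lemma plus_fun_apply [simp]: "(f + g) x = f x + g x"
  by (simp add: plus_fun_def)

lemma proj_limI: "(\<And>n. x n \<in> S n) \<Longrightarrow> (\<And>n. p n (x (Suc n)) = x n) \<Longrightarrow> x \<in> proj_lim S p"
  unfolding proj_lim_def by auto

lemma proj_lim_mem: "x \<in> proj_lim S p \<Longrightarrow> x n \<in> S n"
  unfolding proj_lim_def by blast

text \<open>Oriented towards \<open>x n\<close>: the defining equation \<open>x n = p n (x (Suc n))\<close> of \<open>proj_lim\<close> makes the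
simplifier loop.\<close>
lemma proj_lim_compat: "x \<in> proj_lim S p \<Longrightarrow> p n (x (Suc n)) = x n"
  unfolding proj_lim_def by (metis (mono_tags, lifting) mem_Collect_eq)

lemma add_pos_on_coordinate:
  assumes "add_pos_on (S n) (le n) 0 b"
  shows "add_pos_on (proj_lim S p) (lim_le le) (\<lambda>_. 0) (\<lambda>x. b (x n))"
  using assms proj_lim_mem[of _ S p n]
  unfolding add_pos_on_def additive_on_def positive_fun_on_def lim_le_def by simp

lemma diff_add_pos_on_coordinate:
  assumes "diff_add_pos_on (S n) (le n) 0 b"
  shows "diff_add_pos_on (proj_lim S p) (lim_le le) (\<lambda>_. 0) (\<lambda>x. b (x n))"
proof -
  obtain g h where g: "add_pos_on (S n) (le n) 0 g" and h: "add_pos_on (S n) (le n) 0 h"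
    and b: "\<forall>u\<in>S n. b u = g u - h u"
    using assms unfolding diff_add_pos_on_def by blast
  have "\<forall>x\<in>proj_lim S p. b (x n) = g (x n) - h (x n)"
    using b proj_lim_mem by blast
  then show ?thesis
    using add_pos_on_coordinate[of S n le g p] add_pos_on_coordinate[of S n le h p] g h
    unfolding diff_add_pos_on_def by blast
qed

locale projective_system =
  fixes S :: "nat \<Rightarrow> 'a::real_vector set" and le :: "nat \<Rightarrow> 'a \<Rightarrow> 'a \<Rightarrow> bool"
    and p :: "nat \<Rightarrow> 'a \<Rightarrow> 'a"
  assumes system: "proj_system S le p"
begin

abbreviation X :: "(nat \<Rightarrow> 'a) set" where "X \<equiv> proj_lim S p"

lemma subspace: "linear_subspace_on (S n)"
  using system unfolding proj_system_def ordered_vector_space_on_def by blast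

lemma zero_mem: "0 \<in> S n"
  using subspace unfolding linear_subspace_on_def by blast

lemma add_mem: "x \<in> S n \<Longrightarrow> y \<in> S n \<Longrightarrow> x + y \<in> S n"
  using subspace unfolding linear_subspace_on_def by blast

lemma scaleR_mem: "x \<in> S n \<Longrightarrow> c *\<^sub>R x \<in> S n"
  using subspace unfolding linear_subspace_on_def by blast

lemma diff_mem: "x \<in> S n \<Longrightarrow> y \<in> S n \<Longrightarrow> x - y \<in> S n"
  using add_mem[of x n "(-1) *\<^sub>R y"] scaleR_mem[of y n "-1"] by simp

lemma sum_mem: "(\<And>j. j \<in> A \<Longrightarrow> f j \<in> S n) \<Longrightarrow> sum f A \<in> S n"
  by (induction A rule: infinite_finite_induct) (auto intro: zero_mem add_mem)

lemma le_refl: "x \<in> S n \<Longrightarrow> le n x x"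
  using system unfolding proj_system_def ordered_vector_space_on_def by blast

lemma le_antisym: "x \<in> S n \<Longrightarrow> y \<in> S n \<Longrightarrow> le n x y \<Longrightarrow> le n y x \<Longrightarrow> x = y"
  using system unfolding proj_system_def ordered_vector_space_on_def by blast

lemma le_trans: "x \<in> S n \<Longrightarrow> y \<in> S n \<Longrightarrow> z \<in> S n \<Longrightarrow> le n x y \<Longrightarrow> le n y z \<Longrightarrow> le n x z"
  using system unfolding proj_system_def ordered_vector_space_on_def by blast

lemma add_right_mono: "x \<in> S n \<Longrightarrow> y \<in> S n \<Longrightarrow> z \<in> S n \<Longrightarrow> le n x y \<Longrightarrow> le n (x + z) (y + z)"
  using system unfolding proj_system_def ordered_vector_space_on_def by blast

lemma scaleR_nonneg: "x \<in> S n \<Longrightarrow> le n 0 x \<Longrightarrow> 0 \<le> t \<Longrightarrow> le n 0 (t *\<^sub>R x)"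
  using system zero_mem[of n] unfolding proj_system_def ordered_vector_space_on_def
  by (metis scale_zero_right)

lemma nonneg_diff: "x \<in> S n \<Longrightarrow> y \<in> S n \<Longrightarrow> le n x y \<Longrightarrow> le n 0 (y - x)"
  using add_right_mono[of x n y "- x"] scaleR_mem[of x n "-1"] by simp

lemma sum_nonneg: "(\<And>j. j \<in> A \<Longrightarrow> f j \<in> S n \<and> le n 0 (f j)) \<Longrightarrow> le n 0 (sum f A)"
proof (induction A rule: infinite_finite_induct)
  case (insert j A)
  have "le n (0 + sum f A) (f j + sum f A)"
    using insert by (intro add_right_mono) (auto intro: zero_mem sum_mem)
  then show ?case
    using insert by (auto intro: le_trans[of 0 n "sum f A"] zero_mem sum_mem add_mem)
qed (auto intro: le_refl zero_mem)

lemma sum_mono_subset: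
  assumes "finite B" "A \<subseteq> B" "\<And>j. j \<in> B \<Longrightarrow> f j \<in> S n \<and> le n 0 (f j)"
  shows "le n (sum f A) (sum f B)"
proof -
  have "le n (0 + sum f A) (sum f (B - A) + sum f A)"
    using assms by (intro add_right_mono sum_nonneg) (auto intro: zero_mem sum_mem)
  then show ?thesis
    using assms sum.subset_diff[of A B f] by (simp add: add.commute)
qed

lemma positive_linear_p: "positive_linear_map_on (S (Suc n)) (le (Suc n)) (S n) (le n) (p n)"
  using system unfolding proj_system_def by blast

lemma p_mem: "x \<in> S (Suc n) \<Longrightarrow> p n x \<in> S n"
  using positive_linear_p unfolding positive_linear_map_on_def by blast

lemma p_add: "x \<in> S (Suc n) \<Longrightarrow> y \<in> S (Suc n) \<Longrightarrow> p n (x + y) = p n x + p n y"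
  using positive_linear_p unfolding positive_linear_map_on_def by blast

lemma p_scaleR: "x \<in> S (Suc n) \<Longrightarrow> p n (c *\<^sub>R x) = c *\<^sub>R p n x"
  using positive_linear_p unfolding positive_linear_map_on_def by blast

lemma p_zero: "p n 0 = 0"
  using p_scaleR[OF zero_mem, of n 0] by simp

lemma p_diff: "x \<in> S (Suc n) \<Longrightarrow> y \<in> S (Suc n) \<Longrightarrow> p n (x - y) = p n x - p n y"
  using p_add[of x n "(-1) *\<^sub>R y"] p_scaleR[of y n "-1"] scaleR_mem[of y "Suc n" "-1"] by simp

lemma p_sum: "(\<And>j. j \<in> A \<Longrightarrow> f j \<in> S (Suc n)) \<Longrightarrow> p n (sum f A) = (\<Sum>j\<in>A. p n (f j))"
proof (induction A rule: infinite_finite_induct)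
  case (insert j A)
  then show ?case
    using p_add[of "f j" n "sum f A"] sum_mem[of A f "Suc n"] by simp
qed (simp_all add: p_zero)

lemma proj_lim_zero: "(\<lambda>_. 0) \<in> X"
  by (rule proj_limI) (simp_all add: zero_mem p_zero)

lemma proj_lim_add: "x \<in> X \<Longrightarrow> y \<in> X \<Longrightarrow> x + y \<in> X"
  by (rule proj_limI) (simp_all add: add_mem proj_lim_mem p_add proj_lim_compat)

lemma proj_lim_diff: "x \<in> X \<Longrightarrow> y \<in> X \<Longrightarrow> x - y \<in> X"
  by (rule proj_limI) (simp_all add: diff_mem proj_lim_mem p_diff proj_lim_compat)

lemma proj_lim_scaleR: "x \<in> X \<Longrightarrow> (\<lambda>k. c *\<^sub>R x k) \<in> X"
  by (rule proj_limI) (simp_all add: scaleR_mem proj_lim_mem p_scaleR proj_lim_compat)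

lemma proj_lim_sum:
  assumes "\<And>j. j \<in> A \<Longrightarrow> y j \<in> X"
  shows "(\<lambda>k. \<Sum>j\<in>A. y j k) \<in> X"
proof (rule proj_limI)
  show "(\<Sum>j\<in>A. y j k) \<in> S k" for k
    using assms proj_lim_mem by (blast intro: sum_mem)
  show "p k (\<Sum>j\<in>A. y j (Suc k)) = (\<Sum>j\<in>A. y j k)" for k
  proof -
    have "\<And>j. j \<in> A \<Longrightarrow> y j (Suc k) \<in> S (Suc k)"
      using assms proj_lim_mem by blast
    then have "p k (\<Sum>j\<in>A. y j (Suc k)) = (\<Sum>j\<in>A. p k (y j (Suc k)))"
      by (rule p_sum)
    also have "\<dots> = (\<Sum>j\<in>A. y j k)"
      using assms proj_lim_compat by (intro sum.cong) blast+
    finally show ?thesis .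
  qed
qed

lemma proj_lim_vanishes_below:
  assumes "x \<in> X" "x m = 0" "k \<le> m"
  shows "x k = 0"
  using assms(3,2)
proof (induction rule: dec_induct)
  case (step j)
  then show ?case
    using proj_lim_compat[OF assms(1), of j] by (simp add: p_zero)
qed

lemma additive_zero:
  assumes "additive_on X a"
  shows "a (\<lambda>_. 0) = 0"
proof -
  have "a ((\<lambda>_. 0) + (\<lambda>_. 0)) = a (\<lambda>_. 0) + a (\<lambda>_. 0)"
    using assms proj_lim_zero unfolding additive_on_def by blast
  then show ?thesis
    by (simp add: plus_fun_def)
qed

lemma additive_diff:
  assumes "additive_on X a" "x \<in> X" "y \<in> X"
  shows "a (x - y) = a x - a y"
proof -
  have "a ((x - y) + y) = a (x - y) + a y"
    using assms proj_lim_diff unfolding additive_on_def by blast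
  then show ?thesis
    by (simp add: plus_fun_def fun_diff_def)
qed

lemma additive_sum:
  assumes "additive_on X a" "\<And>j. j \<in> A \<Longrightarrow> y j \<in> X"
  shows "a (\<lambda>k. \<Sum>j\<in>A. y j k) = (\<Sum>j\<in>A. a (y j))"
  using assms(2)
proof (induction A rule: infinite_finite_induct)
  case (insert i A)
  have "(\<lambda>k. \<Sum>j\<in>insert i A. y j k) = y i + (\<lambda>k. \<Sum>j\<in>A. y j k)"
    using insert.hyps by (simp add: plus_fun_def)
  moreover have "a (y i + (\<lambda>k. \<Sum>j\<in>A. y j k)) = a (y i) + a (\<lambda>k. \<Sum>j\<in>A. y j k)"
    using assms(1) insert.prems proj_lim_sum[of A y] unfolding additive_on_def by simp
  ultimately show ?case
    using insert by simp
qed (use assms(1) additive_zero in simp_all)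

lemma additive_scaleR_of_nat:
  assumes "additive_on X a" "x \<in> X"
  shows "a (\<lambda>k. real m *\<^sub>R x k) = real m * a x"
  using additive_sum[OF assms(1), of "{..<m}" "\<lambda>_. x"] assms(2) by (simp add: sum_constant_scaleR)

lemma add_pos_mono:
  assumes "add_pos_on X (lim_le le) (\<lambda>_. 0) a" "x \<in> X" "y \<in> X" "\<And>k. le k (x k) (y k)"
  shows "a x \<le> a y"
proof -
  have "lim_le le (\<lambda>_. 0) (y - x)"
    using nonneg_diff[OF proj_lim_mem[OF assms(2)] proj_lim_mem[OF assms(3)] assms(4)]
    unfolding lim_le_def by simp
  then have "0 \<le> a (y - x)"
    using assms(1-3) proj_lim_diff unfolding add_pos_on_def positive_fun_on_def by blast
  moreover have "a (y - x) = a y - a x"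
    using assms(1-3) additive_diff unfolding add_pos_on_def by blast
  ultimately show ?thesis
    by simp
qed

lemma diagonal_sum_proj_lim:
  assumes "\<And>j. Y j \<in> X" "\<And>j. Y j j = 0"
  shows "(\<lambda>k. \<Sum>j<k. Y j k) \<in> X"
proof (rule proj_limI)
  show "(\<Sum>j<k. Y j k) \<in> S k" for k
    using assms(1) proj_lim_mem by (blast intro: sum_mem)
  show "p k (\<Sum>j<Suc k. Y j (Suc k)) = (\<Sum>j<k. Y j k)" for k
  proof -
    have "p k (\<Sum>j<Suc k. Y j (Suc k)) = (\<Sum>j<Suc k. p k (Y j (Suc k)))"
      using assms(1) proj_lim_mem by (blast intro: p_sum)
    also have "\<dots> = (\<Sum>j<Suc k. Y j k)"
      using proj_lim_compat[OF assms(1)] by simp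
    finally show ?thesis
      using assms(2) by simp
  qed
qed

lemma partial_sum_le_diagonal_sum:
  assumes "\<And>j. Y j \<in> X" "\<And>j. Y j j = 0" "\<And>j k. le k 0 (Y j k)"
  shows "le k (\<Sum>j<N. Y j k) (\<Sum>j<k. Y j k)"
proof -
  have "Y j k = 0" if "\<not> j < k" for j
    using proj_lim_vanishes_below[OF assms(1,2)] that by simp
  then have "(\<Sum>j<N. Y j k) = (\<Sum>j\<in>{..<N} \<inter> {..<k}. Y j k)"
    by (intro sum.mono_neutral_right) auto
  also have "le k \<dots> (\<Sum>j<k. Y j k)"
    using assms(3) proj_lim_mem[OF assms(1)] by (intro sum_mono_subset) auto
  finally show ?thesis .
qed

end

locale regular_projective_system = projective_system +
  assumes regular: "regular_proj_lim S le p"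
begin

definition pos_part :: "nat \<Rightarrow> 'a \<Rightarrow> 'a" where
  "pos_part n u = (SOME s. is_sup_on (S n) (le n) {u, 0} s)"

lemma sup_unique: "is_sup_on (S n) (le n) F s \<Longrightarrow> is_sup_on (S n) (le n) F t \<Longrightarrow> s = t"
  unfolding is_sup_on_def using le_antisym by blast

lemma p_is_sup:
  assumes "finite F" "F \<noteq> {}" "F \<subseteq> S (Suc n)" "is_sup_on (S (Suc n)) (le (Suc n)) F s"
  shows "is_sup_on (S n) (le n) (p n ` F) (p n s)"
  using regular assms unfolding regular_proj_lim_def by blast

lemma pos_part_is_sup: "u \<in> S n \<Longrightarrow> is_sup_on (S n) (le n) {u, 0} (pos_part n u)"
  using regular zero_mem[of n] unfolding regular_proj_lim_def vector_lattice_on_def pos_part_def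
  by (metis someI)

lemma pos_part_mem: "u \<in> S n \<Longrightarrow> pos_part n u \<in> S n"
  using pos_part_is_sup unfolding is_sup_on_def by blast

lemma pos_part_ge: "u \<in> S n \<Longrightarrow> le n u (pos_part n u)"
  using pos_part_is_sup unfolding is_sup_on_def by blast

lemma pos_part_nonneg: "u \<in> S n \<Longrightarrow> le n 0 (pos_part n u)"
  using pos_part_is_sup unfolding is_sup_on_def by blast

lemma pos_part_eq_self: "u \<in> S n \<Longrightarrow> le n 0 u \<Longrightarrow> pos_part n u = u"
  using pos_part_is_sup le_refl by (intro sup_unique[of n "{u, 0}"]) (auto simp: is_sup_on_def)

lemma p_pos_part:
  assumes "u \<in> S (Suc n)"
  shows "p n (pos_part (Suc n) u) = pos_part n (p n u)"
proof (rule sup_unique[OF _ pos_part_is_sup[OF p_mem[OF assms]]])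
  have "is_sup_on (S n) (le n) (p n ` {u, 0}) (p n (pos_part (Suc n) u))"
    using pos_part_is_sup[OF assms] assms zero_mem[of "Suc n"] by (intro p_is_sup) auto
  then show "is_sup_on (S n) (le n) {p n u, 0} (p n (pos_part (Suc n) u))"
    by (simp add: p_zero)
qed

lemma proj_lim_pos_part: "x \<in> X \<Longrightarrow> (\<lambda>k. pos_part k (x k)) \<in> X"
  by (rule proj_limI) (simp_all add: pos_part_mem proj_lim_mem p_pos_part proj_lim_compat)

lemma add_pos_nonneg_witness:
  assumes a: "add_pos_on X (lim_le le) (\<lambda>_. 0) a" and x: "x \<in> X" "x n = 0" "a x \<noteq> 0"
  shows "\<exists>y\<in>X. (\<forall>k. le k 0 (y k)) \<and> y n = 0 \<and> 1 \<le> a y"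
proof -
  have additive: "additive_on X a"
    using a unfolding add_pos_on_def by blast
  obtain x' where x': "x' \<in> X" "x' n = 0" "0 < a x'"
  proof (cases "0 < a x")
    case True
    then show ?thesis
      using x that by blast
  next
    case False
    then have "0 < a ((\<lambda>_. 0) - x)"
      using x additive_diff[OF additive proj_lim_zero x(1)] additive_zero[OF additive] by simp
    then show ?thesis
      using that[of "(\<lambda>_. 0) - x"] proj_lim_diff[OF proj_lim_zero x(1)] x(2) by simp
  qed
  define q where "q = (\<lambda>k. pos_part k (x' k))"
  have q: "q \<in> X" "q n = 0" "\<And>k. le k 0 (q k)"
    unfolding q_def
    using proj_lim_pos_part[OF x'(1)] x'(2) pos_part_eq_self[OF zero_mem le_refl[OF zero_mem]]
      pos_part_nonneg[OF proj_lim_mem[OF x'(1)]]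
    by simp_all
  have "a x' \<le> a q"
    using add_pos_mono[OF a x'(1) q(1)] pos_part_ge[OF proj_lim_mem[OF x'(1)]] unfolding q_def by blast
  then obtain m :: nat where m: "1 < real m * a q"
    using x'(3) ex_less_of_nat_mult[of "a q" 1] by auto
  define y where "y = (\<lambda>k. real m *\<^sub>R q k)"
  have "y \<in> X"
    unfolding y_def by (rule proj_lim_scaleR[OF q(1)])
  moreover have "le k 0 (y k)" for k
    unfolding y_def using scaleR_nonneg[OF proj_lim_mem[OF q(1)] q(3)] by simp
  moreover have "y n = 0" "1 \<le> a y"
    unfolding y_def using q(2) m additive_scaleR_of_nat[OF additive q(1)] by simp_all
  ultimately show ?thesis
    by blast
qed

lemma add_pos_vanishes_on_kernel:
  assumes a: "add_pos_on X (lim_le le) (\<lambda>_. 0) a"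
  shows "\<exists>n\<^sub>0. \<forall>x\<in>X. x n\<^sub>0 = 0 \<longrightarrow> a x = 0"
proof (rule ccontr)
  assume "\<not> ?thesis"
  then have "\<forall>j. \<exists>y\<in>X. (\<forall>k. le k 0 (y k)) \<and> y j = 0 \<and> 1 \<le> a y"
    using add_pos_nonneg_witness[OF a] by blast
  then obtain Y where Y: "\<And>j. Y j \<in> X" "\<And>j k. le k 0 (Y j k)" "\<And>j. Y j j = 0" "\<And>j. 1 \<le> a (Y j)"
    by metis
  define z where "z = (\<lambda>k. \<Sum>j<k. Y j k)"
  have z: "z \<in> X"
    unfolding z_def using diagonal_sum_proj_lim[OF Y(1,3)] .
  have "real N \<le> a z" for N
  proof -
    have "real N \<le> (\<Sum>j<N. a (Y j))"
      using sum_mono[of "{..<N}" "\<lambda>_. 1" "\<lambda>j. a (Y j)"] Y(4) by simp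
    also have "\<dots> = a (\<lambda>k. \<Sum>j<N. Y j k)"
      using additive_sum[of a "{..<N}" Y] a Y(1) unfolding add_pos_on_def by simp
    also have "\<dots> \<le> a z"
      using add_pos_mono[OF a proj_lim_sum[of "{..<N}" Y] z] Y(1) partial_sum_le_diagonal_sum[OF Y(1,3,2)]
      unfolding z_def by blast
    finally show ?thesis .
  qed
  then show False
    using reals_Archimedean2[of "a z"] not_le by blast
qed

lemma add_pos_factors_through_coordinate:
  assumes reduced: "reduced_proj_lim S p" and a: "add_pos_on X (lim_le le) (\<lambda>_. 0) a"
    and kernel: "\<forall>x\<in>X. x n\<^sub>0 = 0 \<longrightarrow> a x = 0" and "n\<^sub>0 \<le> n"
  shows "\<exists>b. add_pos_on (S n) (le n) 0 b \<and> (\<forall>x\<in>X. a x = b (x n))"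
proof -
  have additive: "additive_on X a"
    using a unfolding add_pos_on_def by blast
  have a_eq: "a x = a y" if "x \<in> X" "y \<in> X" "x n = y n" for x y
  proof -
    have "(x - y) n\<^sub>0 = 0"
      using proj_lim_vanishes_below[OF proj_lim_diff[OF that(1,2)] _ assms(4)] that(3) by simp
    then show ?thesis
      using kernel proj_lim_diff[OF that(1,2)] additive_diff[OF additive that(1,2)] by simp
  qed
  have lift: "\<exists>x\<in>X. x n = u" if "u \<in> S n" for u
  proof -
    have "u \<in> (\<lambda>x. x n) ` X"
      using reduced that unfolding reduced_proj_lim_def by simp
    then show ?thesis
      by blast
  qed
  define b where "b u = a (SOME x. x \<in> X \<and> x n = u)" for u
  have b: "b (x n) = a x" if "x \<in> X" for x
  proof -
    have "(SOME y. y \<in> X \<and> y n = x n) \<in> X \<and> (SOME y. y \<in> X \<and> y n = x n) n = x n"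
      using someI[of "\<lambda>y. y \<in> X \<and> y n = x n" x] that by blast
    then show ?thesis
      unfolding b_def using a_eq that by blast
  qed
  have "additive_on (S n) b"
    unfolding additive_on_def
  proof (intro ballI)
    fix u v assume "u \<in> S n" "v \<in> S n"
    then obtain x y where x: "x \<in> X" "x n = u" and y: "y \<in> X" "y n = v"
      using lift by blast
    then show "b (u + v) = b u + b v"
      using b[OF proj_lim_add[OF x(1) y(1)]] b[OF x(1)] b[OF y(1)] additive
      unfolding additive_on_def by simp
  qed
  moreover have "positive_fun_on (S n) (le n) 0 b"
    unfolding positive_fun_on_def
  proof (intro ballI impI)
    fix u assume u: "u \<in> S n" "le n 0 u"
    then obtain x where x: "x \<in> X" "x n = u"
      using lift by blast
    define q where "q = (\<lambda>k. pos_part k (x k))"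
    have q: "q \<in> X" "q n = u" "lim_le le (\<lambda>_. 0) q"
      unfolding q_def lim_le_def
      using proj_lim_pos_part[OF x(1)] x(2) pos_part_eq_self[OF u] pos_part_nonneg[OF proj_lim_mem[OF x(1)]]
      by simp_all
    then show "0 \<le> b u"
      using a b[OF q(1)] unfolding add_pos_on_def positive_fun_on_def by metis
  qed
  ultimately show ?thesis
    using b unfolding add_pos_on_def by metis
qed

lemma add_pos_factors:
  assumes "reduced_proj_lim S p" and a: "add_pos_on X (lim_le le) (\<lambda>_. 0) a"
  shows "\<exists>n\<^sub>a an. \<forall>n\<ge>n\<^sub>a. add_pos_on (S n) (le n) 0 (an n) \<and> (\<forall>x\<in>X. a x = an n (x n))"
proof -
  obtain n\<^sub>0 where "\<forall>x\<in>X. x n\<^sub>0 = 0 \<longrightarrow> a x = 0"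
    using add_pos_vanishes_on_kernel[OF a] by blast
  then have "\<forall>n. \<exists>b. n\<^sub>0 \<le> n \<longrightarrow> add_pos_on (S n) (le n) 0 b \<and> (\<forall>x\<in>X. a x = b (x n))"
    using add_pos_factors_through_coordinate[OF assms] by blast
  then show ?thesis
    by metis
qed

lemma diff_add_pos_factors:
  assumes "reduced_proj_lim S p" and "diff_add_pos_on X (lim_le le) (\<lambda>_. 0) a"
  shows "\<exists>n\<^sub>a an. \<forall>n\<ge>n\<^sub>a. diff_add_pos_on (S n) (le n) 0 (an n) \<and> (\<forall>x\<in>X. a x = an n (x n))"
proof -
  obtain g h where g: "add_pos_on X (lim_le le) (\<lambda>_. 0) g" and h: "add_pos_on X (lim_le le) (\<lambda>_. 0) h"
    and a: "\<forall>x\<in>X. a x = g x - h x"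
    using assms(2) unfolding diff_add_pos_on_def by blast
  obtain n\<^sub>g gn where gn: "\<forall>n\<ge>n\<^sub>g. add_pos_on (S n) (le n) 0 (gn n) \<and> (\<forall>x\<in>X. g x = gn n (x n))"
    using add_pos_factors[OF assms(1) g] by blast
  obtain n\<^sub>h hn where hn: "\<forall>n\<ge>n\<^sub>h. add_pos_on (S n) (le n) 0 (hn n) \<and> (\<forall>x\<in>X. h x = hn n (x n))"
    using add_pos_factors[OF assms(1) h] by blast
  have "diff_add_pos_on (S n) (le n) 0 (\<lambda>u. gn n u - hn n u)
          \<and> (\<forall>x\<in>X. a x = gn n (x n) - hn n (x n))" if "max n\<^sub>g n\<^sub>h \<le> n" for n
  proof -
    have "add_pos_on (S n) (le n) 0 (gn n)" "add_pos_on (S n) (le n) 0 (hn n)"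
      using gn hn that by simp_all
    then have "diff_add_pos_on (S n) (le n) 0 (\<lambda>u. gn n u - hn n u)"
      unfolding diff_add_pos_on_def by blast
    then show ?thesis
      using gn hn a that by auto
  qed
  then show ?thesis
    by (intro exI[of _ "max n\<^sub>g n\<^sub>h"] exI[of _ "\<lambda>n u. gn n u - hn n u"]) simp
qed
end

theorem mainTheorem2:
  fixes S :: "nat \<Rightarrow> 'a::real_vector set"
    and le :: "nat \<Rightarrow> 'a \<Rightarrow> 'a \<Rightarrow> bool"
    and p :: "nat \<Rightarrow> 'a \<Rightarrow> 'a"
  assumes sys: "proj_system S le p"
    and reg: "regular_proj_lim S le p"
    and red: "reduced_proj_lim S p"
  shows
    "(\<forall>a. add_pos_on (proj_lim S p) (lim_le le) (\<lambda>_. 0) a \<longrightarrow>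
        (\<exists>na. \<exists>an :: nat \<Rightarrow> 'a \<Rightarrow> real. \<forall>n\<ge>na.
           add_pos_on (S n) (le n) 0 (an n) \<and> (\<forall>x\<in>proj_lim S p. a x = an n (x n))))
   \<and> (\<forall>n b. add_pos_on (S n) (le n) 0 b \<longrightarrow>
        add_pos_on (proj_lim S p) (lim_le le) (\<lambda>_. 0) (\<lambda>x. b (x n)))
   \<and> (\<forall>a. diff_add_pos_on (proj_lim S p) (lim_le le) (\<lambda>_. 0) a \<longrightarrow>
        (\<exists>na. \<exists>an :: nat \<Rightarrow> 'a \<Rightarrow> real. \<forall>n\<ge>na.
           diff_add_pos_on (S n) (le n) 0 (an n) \<and> (\<forall>x\<in>proj_lim S p. a x = an n (x n))))
   \<and> (\<forall>n b. diff_add_pos_on (S n) (le n) 0 b \<longrightarrow>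
        diff_add_pos_on (proj_lim S p) (lim_le le) (\<lambda>_. 0) (\<lambda>x. b (x n)))"
proof -
  interpret regular_projective_system S le p
    using sys reg by unfold_locales
  show ?thesis
    using add_pos_factors[OF red] diff_add_pos_factors[OF red]
      add_pos_on_coordinate diff_add_pos_on_coordinate
    by blast
qed

end
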